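(* Let $X\in\mathbf{M}_{2N}(\mathbb{C})$ satisfy $X^{*}=X^{\sharp}$. Then there exist a unitary $U$ and a positive semidefinite $P$ in $\mathbf{M}_{2N}(\mathbb{C})$ with $U^{*}=U^{\sharp}$, $P^{*}=P^{\sharp}$ and $X=UP$.
   Context: For $X\in\mathbf{M}_{2N}(\mathbb{C})$ in $N\times N$ blocks $X=\begin{bmatrix}A&B\\C&D\end{bmatrix}$, the dual operation is $X^{\sharp}=\begin{bmatrix}D^{\mathrm T}&-B^{\mathrm T}\\-C^{\mathrm T}&A^{\mathrm T}\end{bmatrix}$. *)

theory Defs
  imports "HOL-Analysis.Analysis"
begin

text \<open>Matrices in M_{2N}(C) are represented as complex^('n+'n)^('n+'n): the index
  type 'n + 'n splits rows/columns into the first block (Inl) and the second block (Inr),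
  each of size N = CARD('n).\<close>

type_synonym 'n cmat2 = "complex ^ ('n + 'n) ^ ('n + 'n)"

definition cadjoint :: "complex ^ 'm ^ 'm \<Rightarrow> complex ^ 'm ^ 'm" where
  "cadjoint X = (\<chi> i j. cnj (X $ j $ i))"

text \<open>The dual: [A B; C D]^sharp = [D^T, -B^T; -C^T, A^T].\<close>
definition sharp :: "('n::finite) cmat2 \<Rightarrow> 'n cmat2" where
  "sharp X = (\<chi> i j. case (i, j) of
       (Inl a, Inl b) \<Rightarrow> X $ Inr b $ Inr a
     | (Inl a, Inr b) \<Rightarrow> - (X $ Inl b $ Inr a)
     | (Inr a, Inl b) \<Rightarrow> - (X $ Inr b $ Inl a)
     | (Inr a, Inr b) \<Rightarrow> X $ Inl b $ Inl a)"

definition unitary_mat :: "complex ^ 'm ^ 'm \<Rightarrow> bool" where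
  "unitary_mat U \<longleftrightarrow> cadjoint U ** U = mat 1 \<and> U ** cadjoint U = mat 1"

definition psd_mat :: "complex ^ 'm ^ 'm \<Rightarrow> bool" where
  "psd_mat P \<longleftrightarrow> cadjoint P = P \<and>
     (\<forall>x :: complex ^ 'm. 0 \<le> Re (\<Sum>i\<in>UNIV. cnj (x $ i) * (P *v x) $ i))"

end

theory Submission
  imports Defs
begin

text \<open>Maximise \<open>U \<mapsto> Re tr (U\<^sup>* X)\<close> over the compact group of unitaries with
  \<open>U\<^sup>* = U\<^sup>\<sharp>\<close>, take a maximiser \<open>U\<close> and put \<open>P = U\<^sup>* X\<close>, which again satisfies
  \<open>P\<^sup>* = P\<^sup>\<sharp>\<close>. For a unit vector \<open>v\<close>, the vector \<open>w = J (cnj v)\<close> with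
  \<open>J = [0 I; -I 0]\<close> is a unit vector orthogonal to \<open>v\<close> with \<open>(v v\<^sup>*)\<^sup>\<sharp> = w w\<^sup>*\<close>,
  so \<open>I + (z - 1) v v\<^sup>* + (cnj z - 1) w w\<^sup>*\<close> lies in the group whenever \<open>|z| = 1\<close>.
  Maximality of \<open>U\<close> along these matrices gives \<open>Re (z \<langle>v, P v\<rangle>) \<le> Re \<langle>v, P v\<rangle>\<close> for all
  such \<open>z\<close>, hence \<open>\<langle>v, P v\<rangle> \<ge> 0\<close>; a matrix whose quadratic form is real and
  nonnegative is positive semidefinite.\<close>

definition block_swap :: "'n + 'n \<Rightarrow> 'n + 'n" where
  "block_swap = case_sum Inr Inl"

definition block_sign :: "'n + 'n \<Rightarrow> complex" where
  "block_sign = case_sum (\<lambda>_. 1) (\<lambda>_. -1)"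

lemma block_swap_block_swap [simp]: "block_swap (block_swap i) = i"
  by (cases i) (auto simp: block_swap_def)

lemma block_sign_block_swap [simp]: "block_sign (block_swap i) = - block_sign i"
  by (cases i) (auto simp: block_swap_def block_sign_def)

lemma block_sign_square [simp]: "block_sign i * block_sign i = 1"
  by (cases i) (auto simp: block_sign_def)

lemma cnj_block_sign [simp]: "cnj (block_sign i) = block_sign i"
  by (cases i) (auto simp: block_sign_def)

lemma sum_block_swap:
  "(\<Sum>i\<in>UNIV. g (block_swap i)) = (\<Sum>i\<in>(UNIV::('n::finite + 'n) set). g i)"
  by (rule sum.reindex_bij_witness[where i = block_swap and j = block_swap]) auto

lemma sharp_nth:
  "sharp X $ i $ j = block_sign i * block_sign j * X $ block_swap j $ block_swap i"
  by (cases i; cases j) (simp_all add: sharp_def block_swap_def block_sign_def)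

lemma sharp_mult: "sharp (A ** B) = sharp B ** sharp (A :: 'n::finite cmat2)"
proof -
  have "(sharp B ** sharp A) $ i $ j = sharp (A ** B) $ i $ j" for i j
  proof -
    have "(sharp B ** sharp A) $ i $ j =
        (\<Sum>k\<in>UNIV. block_sign i * block_sign j *
           (B $ block_swap k $ block_swap i * A $ block_swap j $ block_swap k))"
      unfolding matrix_matrix_mult_def sharp_nth by (auto intro!: sum.cong simp: algebra_simps)
    also have "\<dots> = (\<Sum>k\<in>UNIV. block_sign i * block_sign j *
           (B $ k $ block_swap i * A $ block_swap j $ k))"
      by (rule sum_block_swap)
    also have "\<dots> = sharp (A ** B) $ i $ j"
      unfolding matrix_matrix_mult_def sharp_nth by (simp add: sum_distrib_left algebra_simps)
    finally show ?thesis .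
  qed
  then show ?thesis by (simp add: vec_eq_iff)
qed

lemma sharp_sharp [simp]: "sharp (sharp A) = (A :: 'n::finite cmat2)"
  by (simp add: vec_eq_iff sharp_nth algebra_simps)

lemma sharp_mat_1 [simp]: "sharp (mat 1) = (mat 1 :: 'n::finite cmat2)"
  by (auto simp: vec_eq_iff sharp_nth mat_def) (metis block_swap_block_swap)

lemma sharp_add: "sharp (A + B) = sharp A + sharp (B :: 'n::finite cmat2)"
  by (simp add: vec_eq_iff sharp_nth algebra_simps)

lemma continuous_on_sharp: "continuous_on S (sharp :: 'n::finite cmat2 \<Rightarrow> 'n cmat2)"
proof -
  have eq: "sharp = (\<lambda>X :: 'n cmat2. \<chi> i j. block_sign i * block_sign j * X $ block_swap j $ block_swap i)"
    by (simp add: fun_eq_iff vec_eq_iff sharp_nth)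
  show ?thesis unfolding eq by (intro continuous_intros)
qed

lemma cadjoint_mult: "cadjoint (A ** B) = cadjoint B ** cadjoint (A :: complex ^ 'm ^ 'm)"
  by (simp add: vec_eq_iff cadjoint_def matrix_matrix_mult_def mult.commute)

lemma cadjoint_cadjoint [simp]: "cadjoint (cadjoint A) = A"
  by (simp add: vec_eq_iff cadjoint_def)

lemma cadjoint_mat_1 [simp]: "cadjoint (mat 1) = mat 1"
  by (simp add: vec_eq_iff cadjoint_def mat_def)

lemma cadjoint_add: "cadjoint (A + B) = cadjoint A + cadjoint B"
  by (simp add: vec_eq_iff cadjoint_def)

lemma matrix_add_rdistrib: "(B + C) ** A = B ** A + C ** (A :: 'a::semiring_1 ^ 'm ^ 'm)"
  by (simp add: vec_eq_iff matrix_matrix_mult_def sum.distrib distrib_right)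

lemma continuous_on_cadjoint: "continuous_on S (cadjoint :: complex ^ 'm ^ 'm \<Rightarrow> _)"
  unfolding cadjoint_def by (intro continuous_intros)

lemma cadjoint_eq_sharp_mult:
  "cadjoint A = sharp A \<Longrightarrow> cadjoint B = sharp B \<Longrightarrow>
   cadjoint (A ** B) = sharp (A ** (B :: 'n::finite cmat2))"
  by (simp add: cadjoint_mult sharp_mult)

definition scale_mat :: "complex \<Rightarrow> complex ^ 'm ^ 'm \<Rightarrow> complex ^ 'm ^ 'm" where
  "scale_mat c A = (\<chi> i j. c * A $ i $ j)"

lemma scale_mat_mult_left: "scale_mat c A ** B = scale_mat c (A ** B)"
  by (simp add: vec_eq_iff scale_mat_def matrix_matrix_mult_def sum_distrib_left mult.assoc)

lemma scale_mat_mult_right: "A ** scale_mat c B = scale_mat c (A ** B)"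
  by (simp add: vec_eq_iff scale_mat_def matrix_matrix_mult_def sum_distrib_left mult.left_commute)

lemma scale_mat_scale_mat: "scale_mat a (scale_mat b A) = scale_mat (a * b) A"
  by (simp add: vec_eq_iff scale_mat_def)

lemma cadjoint_scale_mat: "cadjoint (scale_mat c A) = scale_mat (cnj c) (cadjoint A)"
  by (simp add: vec_eq_iff scale_mat_def cadjoint_def)

lemma sharp_scale_mat: "sharp (scale_mat c A) = scale_mat c (sharp (A :: 'n::finite cmat2))"
  by (simp add: vec_eq_iff scale_mat_def sharp_nth)

definition cinner :: "complex ^ 'm \<Rightarrow> complex ^ 'm \<Rightarrow> complex" where
  "cinner u x = (\<Sum>k\<in>UNIV. cnj (u $ k) * x $ k)"

definition outer_prod :: "complex ^ 'm \<Rightarrow> complex ^ 'm \<Rightarrow> complex ^ 'm ^ 'm" where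
  "outer_prod v u = (\<chi> i j. v $ i * cnj (u $ j))"

lemma outer_prod_mult: "outer_prod v u ** outer_prod x y = scale_mat (cinner u x) (outer_prod v y)"
  by (simp add: vec_eq_iff scale_mat_def outer_prod_def cinner_def matrix_matrix_mult_def
      sum_distrib_left sum_distrib_right mult_ac)

lemma cadjoint_outer_prod: "cadjoint (outer_prod v u) = outer_prod u v"
  by (simp add: vec_eq_iff cadjoint_def outer_prod_def)

lemma cinner_commute: "cinner u x = cnj (cinner x u)"
  by (simp add: cinner_def mult.commute)

lemma norm_vec_power2: "(norm (x :: 'a::real_normed_vector ^ 'n))\<^sup>2 = (\<Sum>i\<in>UNIV. (norm (x $ i))\<^sup>2)"
  by (simp add: norm_vec_def L2_set_def sum_nonneg)

lemma cinner_self: "cinner v v = of_real ((norm v)\<^sup>2)"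
  unfolding cinner_def norm_vec_power2 of_real_sum complex_norm_square by (simp add: mult.commute)

subsection \<open>Unitaries compatible with the dual\<close>

definition sharp_unitaries :: "'n::finite cmat2 set" where
  "sharp_unitaries = {U. unitary_mat U \<and> cadjoint U = sharp U}"

lemma mat_1_in_sharp_unitaries: "mat 1 \<in> sharp_unitaries"
  by (simp add: sharp_unitaries_def unitary_mat_def)

lemma unitary_mat_mult: "unitary_mat A \<Longrightarrow> unitary_mat B \<Longrightarrow> unitary_mat (A ** B)"
  unfolding unitary_mat_def cadjoint_mult by (metis matrix_mul_assoc matrix_mul_lid)

lemma sharp_unitaries_mult:
  "A \<in> sharp_unitaries \<Longrightarrow> B \<in> sharp_unitaries \<Longrightarrow> A ** B \<in> sharp_unitaries"
  by (simp add: sharp_unitaries_def unitary_mat_mult cadjoint_eq_sharp_mult)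

lemma cadjoint_in_sharp_unitaries:
  assumes "U \<in> sharp_unitaries"
  shows "cadjoint U \<in> sharp_unitaries"
proof -
  have "cadjoint (cadjoint U) = sharp (sharp U)" by simp
  also have "\<dots> = sharp (cadjoint U)" using assms by (simp add: sharp_unitaries_def)
  finally show ?thesis
    using assms unfolding sharp_unitaries_def unitary_mat_def mem_Collect_eq cadjoint_cadjoint
    by blast
qed

lemma unitary_mat_cancel: "unitary_mat U \<Longrightarrow> U ** (cadjoint U ** X) = X"
  unfolding unitary_mat_def by (simp add: matrix_mul_assoc)

lemma norm_row_unitary:
  assumes "unitary_mat U"
  shows "norm (U $ i) = 1"
proof -
  have "cinner (U $ i) (U $ i) = (U ** cadjoint U) $ i $ i"
    by (simp add: cinner_def cadjoint_def matrix_matrix_mult_def mult.commute)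
  also have "\<dots> = 1" using assms by (simp add: unitary_mat_def mat_def)
  finally have "(norm (U $ i))\<^sup>2 = 1" by (simp only: cinner_self of_real_eq_1_iff)
  then show ?thesis using norm_ge_zero[of "U $ i"] by (auto simp: power2_eq_1_iff)
qed

lemma norm_unitary: "unitary_mat (U :: complex ^ 'm ^ 'm) \<Longrightarrow> norm U = sqrt CARD('m)"
  unfolding norm_vec_def[of U] L2_set_def by (simp add: norm_row_unitary)

lemma compact_sharp_unitaries: "compact (sharp_unitaries :: 'n::finite cmat2 set)"
proof -
  have "bounded (sharp_unitaries :: 'n cmat2 set)"
    unfolding bounded_iff sharp_unitaries_def by (auto simp: norm_unitary)
  moreover have "closed (sharp_unitaries :: 'n cmat2 set)"
  proof -
    have eq: "sharp_unitaries =
        {U :: 'n cmat2. cadjoint U ** U = mat 1} \<inter> {U. U ** cadjoint U = mat 1} \<inter>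
        {U. cadjoint U = sharp U}"
      by (auto simp: sharp_unitaries_def unitary_mat_def)
    have "continuous_on UNIV (\<lambda>U :: 'n cmat2. cadjoint U ** U)"
      and "continuous_on UNIV (\<lambda>U :: 'n cmat2. U ** cadjoint U)"
      unfolding cadjoint_def matrix_matrix_mult_def by (intro continuous_intros)+
    then show ?thesis unfolding eq
      by (intro closed_Int closed_Collect_eq continuous_on_const continuous_on_cadjoint
          continuous_on_sharp)
  qed
  ultimately show ?thesis by (simp add: compact_eq_bounded_closed)
qed

subsection \<open>Phase matrices\<close>

definition dual_vec :: "complex ^ ('n::finite + 'n) \<Rightarrow> complex ^ ('n + 'n)" where
  "dual_vec v = (\<chi> i. block_sign i * cnj (v $ block_swap i))"

lemma sharp_outer_prod: "sharp (outer_prod v v) = outer_prod (dual_vec v) (dual_vec v)"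
  by (simp add: vec_eq_iff outer_prod_def dual_vec_def sharp_nth mult_ac)

lemma cinner_dual_vec_right: "cinner v (dual_vec v) = 0"
proof -
  have "cinner v (dual_vec v) =
      (\<Sum>k\<in>UNIV. cnj (v $ block_swap k) * (block_sign (block_swap k) * cnj (v $ k)))"
    unfolding cinner_def dual_vec_def
    using sum_block_swap[symmetric, where g = "\<lambda>k. cnj (v $ k) * (block_sign k * cnj (v $ block_swap k))"]
    by simp
  also have "\<dots> = - cinner v (dual_vec v)"
    unfolding cinner_def dual_vec_def by (simp add: sum_negf[symmetric] mult_ac)
  finally show ?thesis by simp
qed

lemma cinner_dual_vec_left: "cinner (dual_vec v) v = 0"
  by (metis cinner_commute cinner_dual_vec_right complex_cnj_zero)

lemma cinner_dual_vec_dual_vec: "cinner (dual_vec v) (dual_vec v) = cinner v v"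
proof -
  have summand: "cnj (block_sign k * cnj x) * (block_sign k * cnj x) = x * cnj x" for k x
  proof -
    have "cnj (block_sign k * cnj x) * (block_sign k * cnj x) = (block_sign k * block_sign k) * (x * cnj x)"
      by (simp only: complex_cnj_mult cnj_block_sign complex_cnj_cnj mult_ac)
    then show ?thesis by simp
  qed
  have "cinner (dual_vec v) (dual_vec v) = (\<Sum>k\<in>UNIV. v $ block_swap k * cnj (v $ block_swap k))"
    unfolding cinner_def dual_vec_def by (simp only: vec_lambda_beta summand)
  also have "\<dots> = cinner v v"
    unfolding cinner_def by (subst sum_block_swap) (simp add: mult.commute)
  finally show ?thesis .
qed

text \<open>On the orthonormal pair \<open>v\<close>, \<open>dual_vec v\<close> this acts by \<open>z\<close> and \<open>cnj z\<close>, and it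
  is the identity on their orthogonal complement.\<close>

definition phase_mat :: "complex \<Rightarrow> complex ^ ('n::finite + 'n) \<Rightarrow> 'n cmat2" where
  "phase_mat z v = mat 1 + scale_mat (z - 1) (outer_prod v v)
                         + scale_mat (cnj z - 1) (outer_prod (dual_vec v) (dual_vec v))"

lemma cadjoint_phase_mat: "cadjoint (phase_mat z v) = phase_mat (cnj z) v"
  by (simp add: phase_mat_def cadjoint_add cadjoint_scale_mat cadjoint_outer_prod add_ac)

lemma sharp_phase_mat: "sharp (phase_mat z v) = phase_mat (cnj z) v"
proof -
  have "sharp (outer_prod (dual_vec v) (dual_vec v)) = outer_prod v v"
    by (metis sharp_outer_prod sharp_sharp)
  then show ?thesis
    by (simp add: phase_mat_def sharp_add sharp_scale_mat sharp_outer_prod add_ac)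
qed

lemma phase_mat_1: "phase_mat 1 v = mat 1"
  by (simp add: phase_mat_def vec_eq_iff scale_mat_def)

lemma phase_mat_mult:
  assumes v: "cinner v v = 1"
  shows "phase_mat a v ** phase_mat b v = phase_mat (a * b) v"
proof -
  have w: "cinner (dual_vec v) (dual_vec v) = 1" using v by (simp add: cinner_dual_vec_dual_vec)
  show ?thesis
    unfolding phase_mat_def
    by (simp add: matrix_add_ldistrib matrix_add_rdistrib scale_mat_mult_left scale_mat_mult_right
        outer_prod_mult scale_mat_scale_mat v w cinner_dual_vec_left cinner_dual_vec_right)
      (simp add: vec_eq_iff scale_mat_def algebra_simps)
qed

lemma unitary_phase_mat:
  assumes "cinner v v = 1" and "cmod z = 1"
  shows "unitary_mat (phase_mat z v)"
proof -
  have "cnj z * z = 1" "z * cnj z = 1"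
    using \<open>cmod z = 1\<close> by (simp_all flip: complex_norm_square add: mult.commute)
  then show ?thesis
    by (simp add: unitary_mat_def cadjoint_phase_mat phase_mat_mult[OF assms(1)] phase_mat_1)
qed

lemma phase_mat_in_sharp_unitaries:
  "cinner v v = 1 \<Longrightarrow> cmod z = 1 \<Longrightarrow> phase_mat z v \<in> sharp_unitaries"
  by (simp add: sharp_unitaries_def unitary_phase_mat cadjoint_phase_mat sharp_phase_mat)

subsection \<open>Quadratic forms\<close>

lemma matrix_vector_mult_scalar: "M *v (c *s y) = c *s (M *v (y :: complex ^ 'm))"
  by (simp add: vec_eq_iff matrix_vector_mult_def sum_distrib_left mult_ac)

lemma cinner_add_right: "cinner u (x + y) = cinner u x + cinner u y"
  by (simp add: cinner_def sum.distrib algebra_simps)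

lemma cinner_add_left: "cinner (x + y) u = cinner x u + cinner y u"
  by (simp add: cinner_def sum.distrib algebra_simps)

lemma cinner_scalar_left: "cinner (c *s x) y = cnj c * cinner x y"
  by (simp add: cinner_def sum_distrib_left mult_ac)

lemma cinner_scalar_right: "cinner x (c *s y) = c * cinner x y"
  by (simp add: cinner_def sum_distrib_left mult_ac)

lemma cinner_axis_matrix: "cinner (axis k 1) (M *v axis l 1) = M $ k $ l"
  by (simp add: cinner_def axis_def matrix_vector_mult_def if_distrib if_distribR cong: if_cong)

lemma cadjoint_eq_if_cinner_real:
  assumes real: "\<And>x. Im (cinner x (M *v x)) = 0"
  shows "cadjoint M = M"
proof -
  have expand: "cinner (x + c *s y) (M *v (x + c *s y)) =
      cinner x (M *v x) + cnj c * c * cinner y (M *v y)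
      + c * cinner x (M *v y) + cnj c * cinner y (M *v x)" for x y c
    by (simp add: matrix_vector_right_distrib matrix_vector_mult_scalar cinner_add_left
        cinner_add_right cinner_scalar_left cinner_scalar_right algebra_simps)
  have hermitian: "cinner x (M *v y) = cnj (cinner y (M *v x))" for x y
  proof -
    have "Im (cinner x (M *v y) + cinner y (M *v x)) = 0"
      using real[of "x + 1 *s y"] real[of x] real[of y] unfolding expand by simp
    moreover have "Re (cinner x (M *v y) - cinner y (M *v x)) = 0"
      using real[of "x + \<i> *s y"] real[of x] real[of y] unfolding expand by simp
    ultimately show ?thesis by (simp add: complex_eq_iff)
  qed
  show ?thesis
    by (simp add: vec_eq_iff cadjoint_def) (metis cinner_axis_matrix hermitian)
qed

lemma cinner_nonneg_if_unit:
  assumes unit: "\<And>u. cinner u u = 1 \<Longrightarrow> Im (cinner u (M *v u)) = 0 \<and> 0 \<le> Re (cinner u (M *v u))"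
  shows "Im (cinner v (M *v v)) = 0 \<and> 0 \<le> Re (cinner v (M *v v))"
proof (cases "v = 0")
  case True
  then show ?thesis by (simp add: cinner_def)
next
  case False
  define r where "r = norm v"
  have r: "r > 0" using False by (simp add: r_def)
  define u where "u = complex_of_real (inverse r) *s v"
  have "cinner u u = complex_of_real (inverse r) * complex_of_real (inverse r) * cinner v v"
    unfolding u_def by (simp only: cinner_scalar_left cinner_scalar_right complex_cnj_complex_of_real mult.assoc)
  also have "\<dots> = 1"
    using False by (simp add: cinner_self r_def power2_eq_square field_simps)
  finally have "cinner u u = 1" .
  moreover have "cinner v (M *v v) = complex_of_real (r\<^sup>2) * cinner u (M *v u)"
    using r by (simp add: u_def matrix_vector_mult_scalar cinner_scalar_left cinner_scalar_right
        power2_eq_square field_simps)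
  ultimately show ?thesis using r unit by simp
qed

definition mat_trace :: "complex ^ 'm ^ 'm \<Rightarrow> complex" where
  "mat_trace A = (\<Sum>i\<in>UNIV. A $ i $ i)"

lemma mat_trace_add: "mat_trace (A + B) = mat_trace A + mat_trace B"
  by (simp add: mat_trace_def sum.distrib)

lemma mat_trace_scale_mat: "mat_trace (scale_mat c A) = c * mat_trace A"
  by (simp add: mat_trace_def scale_mat_def sum_distrib_left)

lemma mat_trace_outer_prod_mult: "mat_trace (outer_prod v v ** M) = cinner v (M *v v)"
proof -
  have "mat_trace (outer_prod v v ** M) = (\<Sum>i\<in>UNIV. \<Sum>k\<in>UNIV. v $ i * cnj (v $ k) * M $ k $ i)"
    by (simp add: mat_trace_def outer_prod_def matrix_matrix_mult_def)
  also have "\<dots> = (\<Sum>k\<in>UNIV. \<Sum>i\<in>UNIV. v $ i * cnj (v $ k) * M $ k $ i)"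
    by (rule sum.swap)
  also have "\<dots> = cinner v (M *v v)"
    by (simp add: cinner_def matrix_vector_mult_def sum_distrib_left mult_ac)
  finally show ?thesis .
qed

lemma cinner_dual_vec_matrix:
  assumes "cadjoint M = sharp (M :: 'n::finite cmat2)"
  shows "cinner (dual_vec v) (M *v dual_vec v) = cnj (cinner v (M *v v))"
proof -
  have entry: "block_sign i * block_sign j * M $ i $ j = cnj (M $ block_swap i $ block_swap j)" for i j
  proof -
    have "cadjoint M $ block_swap j $ block_swap i = sharp M $ block_swap j $ block_swap i"
      using assms by simp
    then show ?thesis by (simp add: cadjoint_def sharp_nth mult_ac)
  qed
  have "cinner (dual_vec v) (M *v dual_vec v) = (\<Sum>i\<in>UNIV. \<Sum>j\<in>UNIV.
      v $ block_swap i * cnj (v $ block_swap j) * cnj (M $ block_swap i $ block_swap j))"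
    by (simp add: cinner_def dual_vec_def matrix_vector_mult_def sum_distrib_left mult_ac
        flip: entry)
  also have "\<dots> = (\<Sum>i\<in>UNIV. \<Sum>j\<in>UNIV.
      v $ block_swap i * cnj (v $ j) * cnj (M $ block_swap i $ j))"
    by (intro sum.cong refl sum_block_swap[where g = "\<lambda>j. v $ block_swap i * cnj (v $ j) * cnj (M $ block_swap i $ j)" for i])
  also have "\<dots> = (\<Sum>i\<in>UNIV. \<Sum>j\<in>UNIV. v $ i * cnj (v $ j) * cnj (M $ i $ j))"
    by (rule sum_block_swap[where g = "\<lambda>i. \<Sum>j\<in>UNIV. v $ i * cnj (v $ j) * cnj (M $ i $ j)"])
  also have "\<dots> = cnj (cinner v (M *v v))"
    by (simp add: cinner_def matrix_vector_mult_def sum_distrib_left mult_ac)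
  finally show ?thesis .
qed

lemma mat_trace_phase_mat:
  assumes "cadjoint M = sharp (M :: 'n::finite cmat2)"
  shows "mat_trace (cadjoint (phase_mat z v) ** M) =
    mat_trace M + (cnj z - 1) * cinner v (M *v v) + (z - 1) * cnj (cinner v (M *v v))"
  unfolding cadjoint_phase_mat unfolding phase_mat_def
  by (simp add: matrix_add_rdistrib scale_mat_mult_left
      mat_trace_add mat_trace_scale_mat mat_trace_outer_prod_mult cinner_dual_vec_matrix[OF assms])

lemma trace_maximiser_exists:
  "\<exists>U \<in> sharp_unitaries. \<forall>V \<in> sharp_unitaries.
     Re (mat_trace (cadjoint V ** X)) \<le> Re (mat_trace (cadjoint U ** (X :: 'n::finite cmat2)))"
proof (rule continuous_attains_sup[OF compact_sharp_unitaries])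
  show "sharp_unitaries \<noteq> ({} :: 'n cmat2 set)" using mat_1_in_sharp_unitaries by blast
  show "continuous_on sharp_unitaries (\<lambda>U. Re (mat_trace (cadjoint U ** X)))"
    unfolding mat_trace_def cadjoint_def matrix_matrix_mult_def by (intro continuous_intros)
qed

subsection \<open>Trace maximisers are positive semidefinite\<close>

lemma nonneg_if_Re_rotation_le:
  assumes "\<And>z. cmod z = 1 \<Longrightarrow> Re (z * a) \<le> Re a"
  shows "Im a = 0 \<and> 0 \<le> Re a"
proof (cases "a = 0")
  case True
  then show ?thesis by simp
next
  case False
  have "cmod a = Re (complex_of_real (cmod a))" by simp
  also have "complex_of_real (cmod a) = (cnj a / cmod a) * a"
    using False by (simp add: complex_norm_square[symmetric] power2_eq_square field_simps mult_ac)
  also have "Re \<dots> \<le> Re a"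
    using False by (intro assms) (simp add: norm_divide)
  finally have "cmod a \<le> Re a" .
  then have "(Re a)\<^sup>2 + (Im a)\<^sup>2 \<le> (Re a)\<^sup>2"
    by (metis cmod_power2 norm_ge_zero power_mono)
  then have "Im a = 0" by simp
  with \<open>cmod a \<le> Re a\<close> show ?thesis using norm_ge_zero[of a] by linarith
qed

lemma psd_if_trace_maximal:
  assumes sym: "cadjoint M = sharp (M :: 'n::finite cmat2)"
    and max: "\<And>U. U \<in> sharp_unitaries \<Longrightarrow> Re (mat_trace (cadjoint U ** M)) \<le> Re (mat_trace M)"
  shows "psd_mat M"
proof -
  have unit: "Im (cinner u (M *v u)) = 0 \<and> 0 \<le> Re (cinner u (M *v u))" if "cinner u u = 1" for u
  proof (rule nonneg_if_Re_rotation_le)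
    fix z :: complex assume "cmod z = 1"
    then have "Re (mat_trace (cadjoint (phase_mat (cnj z) u) ** M)) \<le> Re (mat_trace M)"
      using that by (intro max phase_mat_in_sharp_unitaries) simp_all
    then show "Re (z * cinner u (M *v u)) \<le> Re (cinner u (M *v u))"
      by (simp add: mat_trace_phase_mat[OF sym] algebra_simps)
  qed
  have nonneg: "Im (cinner v (M *v v)) = 0 \<and> 0 \<le> Re (cinner v (M *v v))" for v
    by (rule cinner_nonneg_if_unit[OF unit])
  then have "cadjoint M = M"
    by (intro cadjoint_eq_if_cinner_real) blast
  with nonneg show ?thesis
    by (simp add: psd_mat_def cinner_def)
qed

theorem mainTheorem4:
  fixes X :: "('n::finite) cmat2"
  assumes "cadjoint X = sharp X"
  shows "\<exists>U P :: 'n cmat2. unitary_mat U \<and> psd_mat P \<and>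
           cadjoint U = sharp U \<and> cadjoint P = sharp P \<and> X = U ** P"
proof -
  obtain U where U: "U \<in> sharp_unitaries" and max: "\<And>V. V \<in> sharp_unitaries \<Longrightarrow>
      Re (mat_trace (cadjoint V ** X)) \<le> Re (mat_trace (cadjoint U ** X))"
    using trace_maximiser_exists by blast
  define P where "P = cadjoint U ** X"
  have "cadjoint (cadjoint U) = sharp (cadjoint U)"
    using cadjoint_in_sharp_unitaries[OF U] by (simp only: sharp_unitaries_def mem_Collect_eq)
  then have sym: "cadjoint P = sharp P"
    unfolding P_def using assms by (rule cadjoint_eq_sharp_mult)
  have "psd_mat P"
  proof (rule psd_if_trace_maximal[OF sym])
    fix V :: "'n cmat2" assume "V \<in> sharp_unitaries"
    then have "Re (mat_trace (cadjoint (U ** V) ** X)) \<le> Re (mat_trace P)"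
      unfolding P_def by (intro max sharp_unitaries_mult[OF U])
    then show "Re (mat_trace (cadjoint V ** P)) \<le> Re (mat_trace P)"
      by (simp add: P_def cadjoint_mult matrix_mul_assoc)
  qed
  moreover have "unitary_mat U"
    using U by (simp add: sharp_unitaries_def)
  moreover from this have "X = U ** P"
    unfolding P_def by (rule unitary_mat_cancel[symmetric])
  ultimately show ?thesis
    using U sym unfolding sharp_unitaries_def by (intro exI[of _ U] exI[of _ P]) simp
qed

end
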